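(* Let $h$ be a bilinear form on $V$. Then: (1) for $0\leq p\leq n$, $*\Big(\frac{g^{n-p}h^p}{(n-p)!\,p!}\Big)=i_{\frac{h^p}{p!}}\Big(\frac{g^p}{p!}\Big)$; (2) for $0\leq p\leq n-1$, $*\Big(\frac{g^{n-p-1}h^p}{(n-p-1)!\,p!}\Big)=i_{\frac{h^p}{p!}}\Big(\frac{g^{p+1}}{(p+1)!}\Big)$; (3) more generally, for integers $r\geq 0$ and $0\leq p\leq n-r$, $*\Big(\frac{g^{n-p-r}h^p}{(n-p-r)!\,p!}\Big)=i_{\frac{h^p}{p!}}\Big(\frac{g^{p+r}}{(p+r)!}\Big)$.
   Context: $(V,g)$ is an oriented Euclidean real vector space of dimension $n$. Double forms: elements of $\bigoplus_{p,q}\Lambda^pV^*\otimes\Lambda^qV^*$, a $(p,q)$ double form viewed as a bilinear form on $\Lambda^pV\times\Lambda^qV$, with the inner product induced by $g$ (for an orthonormal basis, the $e_I^*\otimes e_J^*$ with strictly increasing multi-indices are orthonormal). Exterior product: $(\theta_1\otimes\theta_2)(\theta_3\otimes\theta_4)=(\theta_1\wedge\theta_3)\otimes(\theta_2\wedge\theta_4)$; $g$ and $h$ are $(1,1)$ double forms and powers are for this product ($h^0=g^0=1$). $i_\psi$ is the adjoint of left exterior multiplication by $\psi$. The double Hodge star sends a $(p,q)$ double form $\omega$ to the $(n-p,n-q)$ double form $*\omega(u_1,u_2)=(-1)^{(p+q)(n-p-q)}\omega( *u_1,*u_2)$, with $*$ the usual Hodge star of $\Lambda V$. *)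

theory Defs
  imports Complex_Main
begin

text \<open>Coordinate model: V = R^n with its standard inner product and standard orientation,
  orthonormal basis e_0,...,e_{n-1}.  A double form is represented by its coefficients
  w.r.t. the orthonormal basis e_I^* (x) e_J^* (I, J strictly increasing multi-indices,
  i.e. finite subsets of {..<n}); the coefficient at (I,J) equals omega(e_I, e_J).\<close>

type_synonym dform = "nat set \<Rightarrow> nat set \<Rightarrow> real"

text \<open>Sign with e_I wedge e_J = wsign I J * e_(I union J) for disjoint I, J.\<close>
definition wsign :: "nat set \<Rightarrow> nat set \<Rightarrow> real" where
  "wsign I J = (-1) ^ card {(i, j). i \<in> I \<and> j \<in> J \<and> j < i}"

text \<open>Exterior product of double forms (bilinear extension of
  (a1 (x) a2)(b1 (x) b2) = (a1 wedge b1) (x) (a2 wedge b2)).\<close>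
definition dmult :: "dform \<Rightarrow> dform \<Rightarrow> dform" where
  "dmult a b = (\<lambda>K L. \<Sum>I\<in>Pow K. \<Sum>J\<in>Pow L.
      wsign I (K - I) * wsign J (L - J) * a I J * b (K - I) (L - J))"

definition dscale :: "real \<Rightarrow> dform \<Rightarrow> dform" where
  "dscale c a = (\<lambda>I J. c * a I J)"

definition dunit :: dform where
  "dunit = (\<lambda>I J. if I = {} \<and> J = {} then 1 else 0)"

primrec dpow :: "dform \<Rightarrow> nat \<Rightarrow> dform" where
  "dpow a 0 = dunit"
| "dpow a (Suc k) = dmult a (dpow a k)"

text \<open>Inner product induced by g: the e_I^* (x) e_J^* are orthonormal.\<close>
definition dinner :: "nat \<Rightarrow> dform \<Rightarrow> dform \<Rightarrow> real" where
  "dinner n a b = (\<Sum>I\<in>Pow {..<n}. \<Sum>J\<in>Pow {..<n}. a I J * b I J)"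

definition dbasis :: "nat set \<Rightarrow> nat set \<Rightarrow> dform" where
  "dbasis K L = (\<lambda>I J. if I = K \<and> J = L then 1 else 0)"

text \<open>i_psi: adjoint of left exterior multiplication by psi, i.e.
  <i_psi w, theta> = <w, psi theta>; its coefficient at (K,L) is <w, psi (e_K (x) e_L)>.\<close>
definition dinterior :: "nat \<Rightarrow> dform \<Rightarrow> dform \<Rightarrow> dform" where
  "dinterior n psi w = (\<lambda>K L. if K \<subseteq> {..<n} \<and> L \<subseteq> {..<n}
      then dinner n w (dmult psi (dbasis K L)) else 0)"

definition metric :: "nat \<Rightarrow> dform" where
  "metric n = (\<lambda>I J. if \<exists>i<n. I = {i} \<and> J = {i} then 1 else 0)"

definition bilform :: "nat \<Rightarrow> (nat \<Rightarrow> nat \<Rightarrow> real) \<Rightarrow> dform" where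
  "bilform n H = (\<lambda>I J. if (\<exists>i<n. I = {i}) \<and> (\<exists>j<n. J = {j})
      then H (the_elem I) (the_elem J) else 0)"

text \<open>Hodge star on Lambda V: *e_K = wsign K K^c e_(K^c).
  For w of type (p,q): ( *w)(u1,u2) = (-1)^((p+q)(n-p-q)) w( *u1, *u2), applied
  componentwise; at (K,L) the relevant component has p = |K^c|, q = |L^c|.\<close>
definition dstar :: "nat \<Rightarrow> dform \<Rightarrow> dform" where
  "dstar n w = (\<lambda>K L. if K \<subseteq> {..<n} \<and> L \<subseteq> {..<n} then
      (let Kc = {..<n} - K; Lc = {..<n} - L; k = int (card Kc + card Lc) in
        (-1) ^ nat \<bar>k * (int n - k)\<bar> * wsign K Kc * wsign L Lc * w Kc Lc)
      else 0)"

end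

theory Submission
  imports Defs
begin

text \<open>In an orthonormal basis \<open>g\<^sup>k/k!\<close> is the double form whose only nonzero coefficients are
  \<open>1\<close> at the diagonal pairs \<open>(A, A)\<close> with \<open>|A| = k\<close>, i.e. the inner product of \<open>\<Lambda>\<^sup>kV\<close>.
  For a \<open>(p,p)\<close> double form \<open>\<psi>\<close> both sides of \<open>*(g\<^sup>n\<^sup>-\<^sup>q/(n-q)! \<psi>) = i\<^sub>\<psi>(g\<^sup>q/q!)\<close>
  are therefore, at \<open>(K, L)\<close>, sums of \<open>\<plusminus>\<psi>(A - K, A - L)\<close> over the \<open>q\<close>-sets \<open>A \<supseteq> K \<union> L\<close>,
  the left-hand one indexed by the complements of the \<open>A\<close>; matching the signs is bookkeeping
  with inversion counts.  All three statements are the case \<open>\<psi> = h\<^sup>p/p!\<close>, \<open>q = p + r\<close>.\<close>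

definition inversions :: "nat set \<Rightarrow> nat set \<Rightarrow> (nat \<times> nat) set" where
  "inversions A B = {(i, j). i \<in> A \<and> j \<in> B \<and> j < i}"

lemma wsign_eq_inversions: "wsign A B = (-1) ^ card (inversions A B)"
  by (simp add: wsign_def inversions_def)

lemma finite_inversions: "finite A \<Longrightarrow> finite B \<Longrightarrow> finite (inversions A B)"
  by (rule finite_subset[of _ "A \<times> B"]) (auto simp: inversions_def)

lemma wsign_square: "wsign A B * wsign A B = 1"
  by (simp add: wsign_def flip: power_add)

lemma wsign_Un_right:
  assumes "finite A" "finite B" "finite C" "B \<inter> C = {}"
  shows "wsign A (B \<union> C) = wsign A B * wsign A C"
proof -
  have "inversions A (B \<union> C) = inversions A B \<union> inversions A C"
    and "inversions A B \<inter> inversions A C = {}"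
    using assms(4) by (auto simp: inversions_def)
  then show ?thesis
    using assms by (simp add: wsign_eq_inversions card_Un_disjoint finite_inversions power_add)
qed

text \<open>Graded commutativity: every pair in \<open>A \<times> B\<close> is an inversion of exactly one of
  \<open>(A, B)\<close> and \<open>(B, A)\<close>.\<close>
lemma wsign_swap:
  assumes "finite A" "finite B" "A \<inter> B = {}"
  shows "wsign A B * wsign B A = (-1) ^ (card A * card B)"
proof -
  let ?T = "prod.swap ` inversions B A"
  have "inversions A B \<union> ?T = A \<times> B" and "inversions A B \<inter> ?T = {}"
    using assms(3) by (auto simp: inversions_def image_iff)
  moreover have "card ?T = card (inversions B A)"
    by (simp add: card_image)
  ultimately have "card (inversions A B) + card (inversions B A) = card A * card B"
    using assms by (metis card_Un_disjoint card_cartesian_product finite_imageI finite_inversions)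
  then show ?thesis
    unfolding wsign_eq_inversions by (metis power_add)
qed

lemma wsign_rotate:
  assumes "finite K" "finite I" "finite X" "K \<inter> I = {}" "K \<inter> X = {}" "I \<inter> X = {}"
  shows "wsign K (I \<union> X) * wsign I X * wsign X K = wsign I (X \<union> K) * (-1) ^ (card K * card (I \<union> X))"
proof -
  have KI: "wsign K I = wsign I K * (-1) ^ (card I * card K)"
    using wsign_swap[of I K] wsign_square[of I K] assms
    by (metis Int_commute mult.assoc mult_1)
  have "wsign K (I \<union> X) * wsign I X * wsign X K = wsign K I * wsign I X * (wsign K X * wsign X K)"
    using assms by (simp add: wsign_Un_right algebra_simps)
  also have "\<dots> = wsign I K * wsign I X * (-1) ^ (card K * (card I + card X))"
    using assms by (simp add: KI wsign_swap power_add add_mult_distrib2 algebra_simps)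
  also have "\<dots> = wsign I (X \<union> K) * (-1) ^ (card K * card (I \<union> X))"
    using assms by (simp add: wsign_Un_right card_Un_disjoint Int_commute)
  finally show ?thesis .
qed

lemma wsign_dual_term:
  assumes "finite N" "K \<subseteq> N" "L \<subseteq> N" "I \<subseteq> (N - K) \<inter> (N - L)" "card K = card L"
  shows "wsign K (N - K) * wsign L (N - L) * (wsign I (N - K - I) * wsign I (N - L - I))
       = wsign (N - I - K) K * wsign (N - I - L) L"
proof -
  have rotated: "wsign M (N - M) * wsign I (N - M - I) * wsign (N - I - M) M
      = wsign I (N - I) * (-1) ^ (card M * card (N - M))" if "M \<subseteq> N" "I \<subseteq> N - M" for M
  proof -
    have "I \<union> (N - M - I) = N - M" "(N - M - I) \<union> M = N - I" "N - I - M = N - M - I"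
      using that by auto
    then show ?thesis
      using wsign_rotate[of M I "N - M - I"] that assms(1) by (auto intro: finite_subset)
  qed
  define t where "t = wsign I (N - I) * (-1) ^ (card K * card (N - K))"
  have "card (N - L) = card (N - K)"
    using assms by (simp add: card_Diff_subset finite_subset)
  then have "wsign K (N - K) * wsign I (N - K - I) * wsign (N - I - K) K = t"
    and "wsign L (N - L) * wsign I (N - L - I) * wsign (N - I - L) L = t"
    using rotated[of K] rotated[of L] assms by (auto simp: t_def)
  then have K: "wsign K (N - K) * wsign I (N - K - I) = t * wsign (N - I - K) K"
    and L: "wsign L (N - L) * wsign I (N - L - I) = t * wsign (N - I - L) L"
    by (metis wsign_square mult.assoc mult_1_right)+
  have "t * t = 1"
    by (simp add: t_def algebra_simps wsign_square flip: power_add)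
  then show ?thesis
    by (simp add: K L algebra_simps)
qed

lemma sum_eq_single:
  assumes "finite S" "\<And>x. x \<in> S \<Longrightarrow> x \<noteq> a \<Longrightarrow> f x = 0"
  shows "sum f S = (if a \<in> S then f a else 0)"
  using assms by (cases "a \<in> S") (auto simp: sum.remove intro!: sum.neutral)

lemma dmult_infinite:
  assumes "infinite K \<or> infinite L"
  shows "dmult a b K L = 0"
  using assms by (auto simp: dmult_def)

lemma dmult_dscale_left: "dmult (dscale c a) b = dscale c (dmult a b)"
  by (simp add: dmult_def dscale_def sum_distrib_left algebra_simps)

lemma dmult_dscale_right: "dmult a (dscale c b) = dscale c (dmult a b)"
  by (simp add: dmult_def dscale_def sum_distrib_left algebra_simps)

lemma dscale_dscale: "dscale a (dscale b w) = dscale (a * b) w"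
  by (simp add: dscale_def mult.assoc)

lemma dscale_1: "dscale 1 w = w"
  by (simp add: dscale_def)

definition pure_bidegree :: "nat \<Rightarrow> nat \<Rightarrow> dform \<Rightarrow> bool" where
  "pure_bidegree p q w \<longleftrightarrow> (\<forall>I J. w I J \<noteq> 0 \<longrightarrow> card I = p \<and> card J = q)"

lemma pure_bidegree_dunit: "pure_bidegree 0 0 dunit"
  by (simp add: pure_bidegree_def dunit_def)

lemma pure_bidegree_bilform: "pure_bidegree 1 1 (bilform n H)"
  by (auto simp: pure_bidegree_def bilform_def)

lemma pure_bidegree_dscale: "pure_bidegree p q w \<Longrightarrow> pure_bidegree p q (dscale c w)"
  by (auto simp add: pure_bidegree_def dscale_def)

lemma pure_bidegree_dmult:
  assumes "pure_bidegree p q a" "pure_bidegree r s b"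
  shows "pure_bidegree (p + r) (q + s) (dmult a b)"
  unfolding pure_bidegree_def
proof (intro allI impI)
  fix K L assume nz: "dmult a b K L \<noteq> 0"
  then have fin: "finite K" "finite L"
    using dmult_infinite by blast+
  obtain I J where IJ: "I \<subseteq> K" "J \<subseteq> L" "a I J \<noteq> 0" "b (K - I) (L - J) \<noteq> 0"
    using nz unfolding dmult_def
    by (auto elim!: sum.not_neutral_contains_not_neutral)
  then have "card I = p" "card J = q" "card (K - I) = r" "card (L - J) = s"
    using assms by (auto simp: pure_bidegree_def)
  then show "card K = p + r \<and> card L = q + s"
    using IJ fin by (metis card_Diff_subset card_mono finite_subset le_add_diff_inverse)
qed

lemma pure_bidegree_dpow: "pure_bidegree 1 1 a \<Longrightarrow> pure_bidegree k k (dpow a k)"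
  by (induction k) (auto simp: pure_bidegree_dunit dest: pure_bidegree_dmult)

text \<open>The inner product of \<open>\<Lambda>\<^sup>kV\<close>, which is \<open>g\<^sup>k/k!\<close>.\<close>
definition dmetric :: "nat \<Rightarrow> nat \<Rightarrow> dform" where
  "dmetric n k = (\<lambda>I J. if I = J \<and> I \<subseteq> {..<n} \<and> card I = k then 1 else 0)"

lemma dunit_eq_dmetric: "dunit = dmetric n 0"
  by (auto simp: dunit_def dmetric_def fun_eq_iff finite_subset)

lemma metric_eq_dmetric: "metric n = dmetric n 1"
  by (auto simp: metric_def dmetric_def fun_eq_iff card_Suc_eq)

lemma dmult_dmetric_left:
  assumes "finite P" "finite Q"
  shows "dmult (dmetric n m) \<psi> P Q = (\<Sum>I | I \<subseteq> P \<inter> Q \<inter> {..<n} \<and> card I = m.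
           wsign I (P - I) * wsign I (Q - I) * \<psi> (P - I) (Q - I))"
proof -
  have "dmult (dmetric n m) \<psi> P Q = (\<Sum>I\<in>Pow P. if I \<subseteq> Q \<inter> {..<n} \<and> card I = m
           then wsign I (P - I) * wsign I (Q - I) * \<psi> (P - I) (Q - I) else 0)"
    unfolding dmult_def
  proof (intro sum.cong refl)
    fix I
    have summand: "(\<lambda>J. wsign I (P - I) * wsign J (Q - J) * dmetric n m I J * \<psi> (P - I) (Q - J))
        = (\<lambda>J. if I = J then (if I \<subseteq> {..<n} \<and> card I = m
             then wsign I (P - I) * wsign I (Q - I) * \<psi> (P - I) (Q - I) else 0) else 0)"
      by (auto simp: dmetric_def fun_eq_iff)
    show "(\<Sum>J\<in>Pow Q. wsign I (P - I) * wsign J (Q - J) * dmetric n m I J * \<psi> (P - I) (Q - J))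
        = (if I \<subseteq> Q \<inter> {..<n} \<and> card I = m
           then wsign I (P - I) * wsign I (Q - I) * \<psi> (P - I) (Q - I) else 0)"
      unfolding summand using assms by auto
  qed
  also have "\<dots> = (\<Sum>I | I \<subseteq> P \<inter> Q \<inter> {..<n} \<and> card I = m.
           wsign I (P - I) * wsign I (Q - I) * \<psi> (P - I) (Q - I))"
    using assms by (simp add: sum.inter_filter[symmetric])
  finally show ?thesis .
qed

lemma dmult_dmetric_dmetric:
  "dmult (dmetric n a) (dmetric n b) = dscale (of_nat ((a + b) choose a)) (dmetric n (a + b))"
proof (intro ext)
  fix K L
  show "dmult (dmetric n a) (dmetric n b) K L = dscale (of_nat ((a + b) choose a)) (dmetric n (a + b)) K L"
  proof (cases "finite K \<and> finite L")
    case False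
    then show ?thesis
      by (auto simp: dmult_infinite dscale_def dmetric_def finite_subset)
  next
    case fin: True
    let ?S = "{I. I \<subseteq> K \<inter> L \<inter> {..<n} \<and> card I = a}"
    let ?P = "K = L \<and> K \<subseteq> {..<n} \<and> card K = a + b"
    have summand: "wsign I (K - I) * wsign I (L - I) * dmetric n b (K - I) (L - I) = (if ?P then 1 else 0)"
      if "I \<in> ?S" for I
    proof -
      have "finite I" "I \<subseteq> K" "I \<subseteq> L" "I \<subseteq> {..<n}" "card I = a"
        using that fin by (auto intro: finite_subset)
      then have "(K - I = L - I \<and> K - I \<subseteq> {..<n} \<and> card (K - I) = b) \<longleftrightarrow> ?P"
        using fin by (auto simp: card_Diff_subset dest: card_mono[of K I])
      then show ?thesis
        by (simp add: dmetric_def wsign_square)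
    qed
    have card_S: "card ?S = (a + b) choose a" if ?P
    proof -
      have "?S = {I. I \<subseteq> K \<and> card I = a}"
        using that by auto
      then show ?thesis
        using that fin by (auto simp: n_subsets)
    qed
    have "dmult (dmetric n a) (dmetric n b) K L = (\<Sum>I\<in>?S. if ?P then 1 else 0)"
      using fin by (simp only: dmult_dmetric_left) (rule sum.cong[OF refl summand])
    also have "\<dots> = (if ?P then of_nat ((a + b) choose a) else 0)"
    proof (cases ?P)
      case True
      show ?thesis
        unfolding if_P[OF True] real_of_card[symmetric] card_S[OF True] ..
    next
      case False
      show ?thesis
        unfolding if_not_P[OF False] by simp
    qed
    finally show ?thesis
      by (auto simp: dscale_def dmetric_def)
  qed
qed

lemma dpow_metric: "dpow (metric n) k = dscale (fact k) (dmetric n k)"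
proof (induction k)
  case 0
  show ?case
    by (simp add: dunit_eq_dmetric dscale_def)
next
  case (Suc k)
  then show ?case
    by (simp add: metric_eq_dmetric dmult_dscale_right dmult_dmetric_dmetric dscale_dscale algebra_simps)
qed

lemma dmult_dbasis_right:
  assumes "finite P" "finite Q"
  shows "dmult \<psi> (dbasis K L) P Q = (if K \<subseteq> P \<and> L \<subseteq> Q
           then wsign (P - K) K * wsign (Q - L) L * \<psi> (P - K) (Q - L) else 0)"
proof -
  have inner: "(\<Sum>J\<in>Pow Q. wsign I (P - I) * wsign J (Q - J) * \<psi> I J * dbasis K L (P - I) (Q - J))
      = (if L \<subseteq> Q then wsign I (P - I) * wsign (Q - L) L * \<psi> I (Q - L) * dbasis K L (P - I) L else 0)"
    for I
  proof -
    have "J = Q - L" if "J \<subseteq> Q" "Q - J = L" for J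
      using that by blast
    then show ?thesis
      using assms by (subst sum_eq_single[where a = "Q - L"]) (auto simp: dbasis_def Diff_Diff_Int Int_absorb1)
  qed
  have "I = P - K" if "I \<subseteq> P" "P - I = K" for I
    using that by blast
  then show ?thesis
    unfolding dmult_def inner
    using assms by (subst sum_eq_single[where a = "P - K"]) (auto simp: dbasis_def Diff_Diff_Int Int_absorb1)
qed

lemma dinner_dmetric: "dinner n (dmetric n q) w = (\<Sum>A | A \<subseteq> {..<n} \<and> card A = q. w A A)"
proof -
  have "dinner n (dmetric n q) w = (\<Sum>A\<in>Pow {..<n}. if card A = q then w A A else 0)"
    unfolding dinner_def
    by (intro sum.cong refl, subst sum_eq_single[where a = A for A]) (auto simp: dmetric_def)
  also have "\<dots> = (\<Sum>A | A \<subseteq> {..<n} \<and> card A = q. w A A)"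
    by (simp add: sum.inter_filter[symmetric])
  finally show ?thesis .
qed

lemma dinterior_dmetric:
  assumes "K \<subseteq> {..<n}" "L \<subseteq> {..<n}"
  shows "dinterior n \<psi> (dmetric n q) K L = (\<Sum>A | A \<subseteq> {..<n} \<and> K \<union> L \<subseteq> A \<and> card A = q.
           wsign (A - K) K * wsign (A - L) L * \<psi> (A - K) (A - L))"
proof -
  have "dinterior n \<psi> (dmetric n q) K L = (\<Sum>A | A \<subseteq> {..<n} \<and> card A = q.
      if K \<union> L \<subseteq> A then wsign (A - K) K * wsign (A - L) L * \<psi> (A - K) (A - L) else 0)"
    using assms unfolding dinterior_def dinner_dmetric if_P[OF conjI[OF assms]]
    by (intro sum.cong refl) (simp add: dmult_dbasis_right finite_subset[of _ "{..<n}"])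
  also have "\<dots> = (\<Sum>A | A \<subseteq> {..<n} \<and> K \<union> L \<subseteq> A \<and> card A = q.
      wsign (A - K) K * wsign (A - L) L * \<psi> (A - K) (A - L))"
    by (simp add: sum.inter_filter[symmetric] conj_ac)
  finally show ?thesis .
qed

lemma neg_one_power_even_abs:
  fixes k m :: int
  assumes "even k"
  shows "(-1::real) ^ nat \<bar>k * m\<bar> = 1"
proof -
  have "even (nat \<bar>k * m\<bar>)"
    using assms by (simp add: even_nat_iff)
  then show ?thesis
    by simp
qed

text \<open>Complementation \<open>I \<mapsto> N - I\<close> matches the terms of both sides; the Hodge sign is \<open>1\<close>
  because only pairs \<open>(K, L)\<close> with \<open>card K = card L\<close> contribute.\<close>
theorem dstar_dmult_dmetric:
  assumes "q \<le> n" "pure_bidegree p p \<psi>"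
  shows "dstar n (dmult (dmetric n (n - q)) \<psi>) = dinterior n \<psi> (dmetric n q)"
proof (intro ext)
  fix K L
  let ?N = "{..<n}"
  show "dstar n (dmult (dmetric n (n - q)) \<psi>) K L = dinterior n \<psi> (dmetric n q) K L"
  proof (cases "K \<subseteq> ?N \<and> L \<subseteq> ?N")
    case False
    then show ?thesis
      by (auto simp: dstar_def dinterior_def)
  next
    case True
    then have KL: "K \<subseteq> ?N" "L \<subseteq> ?N"
      by auto
    define c where "c = int (card (?N - K) + card (?N - L))"
    define s :: real where "s = (-1) ^ nat \<bar>c * (int n - c)\<bar>"
    let ?S = "{I. I \<subseteq> (?N - K) \<inter> (?N - L) \<inter> ?N \<and> card I = n - q}"
    let ?T = "{A. A \<subseteq> ?N \<and> K \<union> L \<subseteq> A \<and> card A = q}"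
    let ?g = "\<lambda>I. s * wsign K (?N - K) * wsign L (?N - L)
        * (wsign I (?N - K - I) * wsign I (?N - L - I) * \<psi> (?N - K - I) (?N - L - I))"
    let ?h = "\<lambda>A. wsign (A - K) K * wsign (A - L) L * \<psi> (A - K) (A - L)"
    have summand: "?g I = ?h (?N - I)" if "I \<subseteq> (?N - K) \<inter> (?N - L)" for I
    proof -
      have diff: "?N - I - K = ?N - K - I" "?N - I - L = ?N - L - I"
        by blast+
      show ?thesis
      proof (cases "\<psi> (?N - K - I) (?N - L - I) = 0")
        case True
        then show ?thesis
          by (simp add: diff)
      next
        case False
        then have "card (?N - K - I) = card (?N - L - I)"
          using assms(2) by (simp add: pure_bidegree_def)
        moreover have "card (?N - M) = card (?N - M - I) + card I" if "I \<subseteq> ?N - M" for M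
          using that by (metis card_Diff_subset card_mono finite_Diff finite_lessThan
              finite_subset le_add_diff_inverse2)
        ultimately have "card (?N - K) = card (?N - L)"
          using that by auto
        then have "s = 1"
          by (simp add: s_def c_def neg_one_power_even_abs)
        have "card K \<le> n" "card L \<le> n"
          using KL card_mono[OF finite_lessThan] by fastforce+
        with \<open>card (?N - K) = card (?N - L)\<close> have "card K = card L"
          using KL by (simp add: card_Diff_subset finite_subset)
        then show ?thesis
          using wsign_dual_term[of ?N K L I] KL that \<open>s = 1\<close> by (simp add: diff)
      qed
    qed
    have "dstar n (dmult (dmetric n (n - q)) \<psi>) K L = (\<Sum>I\<in>?S. ?g I)"
      using KL by (simp add: dstar_def Let_def s_def c_def dmult_dmetric_left sum_distrib_left)
    also have "\<dots> = (\<Sum>A\<in>?T. ?h A)"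
    proof (rule sum.reindex_bij_witness[where i = "\<lambda>A. ?N - A" and j = "\<lambda>I. ?N - I"])
      fix I assume "I \<in> ?S"
      then show "?N - (?N - I) = I" "?N - I \<in> ?T" "?h (?N - I) = ?g I"
        using assms(1) KL summand by (auto simp: card_Diff_subset finite_subset)
    next
      fix A assume "A \<in> ?T"
      then show "?N - (?N - A) = A" "?N - A \<in> ?S"
        by (auto simp: card_Diff_subset finite_subset)
    qed
    also have "\<dots> = dinterior n \<psi> (dmetric n q) K L"
      using KL by (simp add: dinterior_dmetric)
    finally show ?thesis .
  qed
qed

lemma dscale_inverse_fact_dpow_metric: "dscale (1 / fact k) (dpow (metric n) k) = dmetric n k"
  by (simp add: dpow_metric dscale_dscale dscale_1)

corollary dstar_metric_power_mult:
  assumes "p + r \<le> n" "pure_bidegree 1 1 h"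
  shows "dstar n (dscale (1 / (fact (n - p - r) * fact p)) (dmult (dpow (metric n) (n - p - r)) (dpow h p)))
       = dinterior n (dscale (1 / fact p) (dpow h p)) (dscale (1 / fact (p + r)) (dpow (metric n) (p + r)))"
proof -
  let ?\<psi> = "dscale (1 / fact p) (dpow h p)"
  have "dscale (1 / (fact (n - p - r) * fact p)) (dmult (dpow (metric n) (n - p - r)) (dpow h p))
      = dmult (dmetric n (n - (p + r))) ?\<psi>"
    by (simp add: dscale_inverse_fact_dpow_metric[symmetric] dmult_dscale_left dmult_dscale_right
        dscale_dscale diff_diff_eq mult.commute)
  moreover have "pure_bidegree p p ?\<psi>"
    using assms(2) by (intro pure_bidegree_dscale pure_bidegree_dpow)
  ultimately show ?thesis
    using dstar_dmult_dmetric[OF assms(1)] by (simp add: dscale_inverse_fact_dpow_metric)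
qed

theorem mainTheorem12:
  fixes n :: nat and H :: "nat \<Rightarrow> nat \<Rightarrow> real"
  defines "g \<equiv> metric n" and "h \<equiv> bilform n H"
  shows "(\<forall>p. p \<le> n \<longrightarrow>
            dstar n (dscale (1 / (fact (n - p) * fact p)) (dmult (dpow g (n - p)) (dpow h p)))
          = dinterior n (dscale (1 / fact p) (dpow h p)) (dscale (1 / fact p) (dpow g p)))
       \<and> (\<forall>p. p + 1 \<le> n \<longrightarrow>
            dstar n (dscale (1 / (fact (n - p - 1) * fact p)) (dmult (dpow g (n - p - 1)) (dpow h p)))
          = dinterior n (dscale (1 / fact p) (dpow h p)) (dscale (1 / fact (p + 1)) (dpow g (p + 1))))
       \<and> (\<forall>r p. p + r \<le> n \<longrightarrow>
            dstar n (dscale (1 / (fact (n - p - r) * fact p)) (dmult (dpow g (n - p - r)) (dpow h p)))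
          = dinterior n (dscale (1 / fact p) (dpow h p)) (dscale (1 / fact (p + r)) (dpow g (p + r))))"
  unfolding g_def h_def
  using dstar_metric_power_mult[where r = 0] dstar_metric_power_mult[where r = 1]
    dstar_metric_power_mult pure_bidegree_bilform
  by auto

end
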